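(* Let $\Omega$ be a finite set, $k\geq3$, $\Psi$ a finite nonempty set of functions $\Omega^k\to(0,\infty)$ and $\Psi^*=\{\psi^J:\psi\in\Psi,\,J\subset[k]\}$. For every integer $L>0$ and every $\alpha>0$ there exist $\varepsilon=\varepsilon(\alpha,L,\Psi)>0$ and $n_0=n_0(\varepsilon,L)$ such that the following holds. Let $G$ be a factor graph with $n>n_0$ variable nodes all of whose weight functions lie in $\Psi^*$, and suppose $\mu_G$ is $(\varepsilon,2)$-symmetric. Let $G^+$ be obtained from $G$ by adding $L$ constraint nodes $b_1,\ldots,b_L$ with arbitrary neighbourhoods and arbitrary weight functions $\psi_{b_1},\ldots,\psi_{b_L}\in\Psi^*$. Then $\mu_{G^+}$ is $(\alpha,2)$-symmetric and $$\sum_{x\in V(G)}\left\|\mu_{G,x}-\mu_{G^+,x}\right\|_{TV}<\alpha n.$$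
   Context: Factor graphs: a factor graph $G$ has variable nodes $V(G)$, constraint nodes $F(G)$, for each $a\in F(G)$ an ordered tuple $\partial a$ of variable nodes and a weight function $\psi_a:\Omega^{|\partial a|}\to(0,\infty)$; its Gibbs measure is $\mu_G(\sigma)=Z_G^{-1}\prod_a\psi_a(\sigma(\partial a))$ on $\Omega^{V(G)}$, and $\mu_{G,x}$ is the marginal of $x$. For $\psi:\Omega^k\to(0,\infty)$ and $J\subset[k]$, $\psi^J:\Omega^J\to(0,\infty)$ is $\psi^J((\sigma_j)_{j\in J})=|\Omega|^{|J|-k}\sum_{(\sigma_j)_{j\notin J}\in\Omega^{k-|J|}}\psi(\sigma_1,\ldots,\sigma_k)$. For a probability measure $\mu$ on $\Omega^n$ (coordinates identified with the $n$ variable nodes), $\mu_x$ and $\mu_{x,y}$ denote its one- and two-coordinate marginals; $\mu$ is $(\varepsilon,2)$-symmetric if $\sum_{x,y\in[n]}\|\mu_{x,y}-\mu_x\otimes\mu_y\|_{TV}<\varepsilon n^2$. *)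

theory Defs
  imports Complex_Main "HOL-Library.FuncSet"
begin

text \<open>The spin set Omega is a finite type 'o. A k-ary weight function is a function on
  lists (tuples) of spins; only its values on lists of the right length matter.\<close>

text \<open>psi^J for J a subset of {0..<k}: the tuple (sigma_j)_{j in J} is listed in increasing
  order of j, which is exactly nths sigma J.\<close>
definition psiJ :: "nat \<Rightarrow> ('o::finite list \<Rightarrow> real) \<Rightarrow> nat set \<Rightarrow> 'o list \<Rightarrow> real" where
  "psiJ k \<psi> J \<tau> = real (card (UNIV :: 'o set)) powr (real (card J) - real k) *
     (\<Sum>\<sigma>\<in>{\<sigma>. length \<sigma> = k \<and> nths \<sigma> J = \<tau>}. \<psi> \<sigma>)"

definition psi_star :: "nat \<Rightarrow> ('o::finite list \<Rightarrow> real) set \<Rightarrow> (('o list \<Rightarrow> real) \<times> nat) set" where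
  "psi_star k \<Psi> = {(psiJ k \<psi> J, card J) | \<psi> J. \<psi> \<in> \<Psi> \<and> J \<subseteq> {..<k}}"

text \<open>A factor graph with variable nodes {0..<n} is given by n together with the list of its
  constraint nodes; each constraint node is a pair (neighbourhood tuple, weight function).\<close>
type_synonym 'o constraints = "(nat list \<times> ('o list \<Rightarrow> real)) list"

definition valid_fg :: "nat \<Rightarrow> (('o list \<Rightarrow> real) \<times> nat) set \<Rightarrow> 'o constraints \<Rightarrow> bool" where
  "valid_fg n W G = (\<forall>(d, \<psi>) \<in> set G. set d \<subseteq> {..<n} \<and> (\<psi>, length d) \<in> W)"

definition configs :: "nat \<Rightarrow> (nat \<Rightarrow> 'o) set" where
  "configs n = PiE {..<n} (\<lambda>_. UNIV)"

definition weight :: "'o constraints \<Rightarrow> (nat \<Rightarrow> 'o) \<Rightarrow> real" where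
  "weight G \<sigma> = prod_list (map (\<lambda>(d, \<psi>). \<psi> (map \<sigma> d)) G)"

definition partition_fn :: "nat \<Rightarrow> 'o constraints \<Rightarrow> real" where
  "partition_fn n G = (\<Sum>\<sigma>\<in>configs n. weight G \<sigma>)"

definition gibbs :: "nat \<Rightarrow> 'o constraints \<Rightarrow> (nat \<Rightarrow> 'o) \<Rightarrow> real" where
  "gibbs n G \<sigma> = weight G \<sigma> / partition_fn n G"

definition marg1 :: "nat \<Rightarrow> 'o constraints \<Rightarrow> nat \<Rightarrow> 'o \<Rightarrow> real" where
  "marg1 n G x \<omega> = (\<Sum>\<sigma>\<in>{\<sigma>\<in>configs n. \<sigma> x = \<omega>}. gibbs n G \<sigma>)"

definition marg2 :: "nat \<Rightarrow> 'o constraints \<Rightarrow> nat \<Rightarrow> nat \<Rightarrow> 'o \<times> 'o \<Rightarrow> real" where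
  "marg2 n G x y p = (\<Sum>\<sigma>\<in>{\<sigma>\<in>configs n. \<sigma> x = fst p \<and> \<sigma> y = snd p}. gibbs n G \<sigma>)"

definition tv :: "('b::finite \<Rightarrow> real) \<Rightarrow> ('b \<Rightarrow> real) \<Rightarrow> real" where
  "tv p q = (1/2) * (\<Sum>z\<in>UNIV. \<bar>p z - q z\<bar>)"

definition symmetric2 :: "real \<Rightarrow> nat \<Rightarrow> 'o::finite constraints \<Rightarrow> bool" where
  "symmetric2 \<epsilon> n G =
     ((\<Sum>x<n. \<Sum>y<n. tv (marg2 n G x y) (\<lambda>p. marg1 n G x (fst p) * marg1 n G y (snd p)))
        < \<epsilon> * real n ^ 2)"

end

theory Submission
  imports Defs
begin

text \<open>Every weight function of the system is bounded between two positive constants, so adding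
  L constraints multiplies the Gibbs weight by a factor F between m and M. The new measure is the
  old one reweighted by F, and the shift of a marginal equals a covariance between F and the
  centred spin indicators. By Cauchy-Schwarz, summed over all variables these covariances are at
  most M times the square root of the summed pairwise covariances of the indicators, which is
  O(sqrt(eps) n) because mu_G is (\<epsilon>,2)-symmetric. The same estimate controls the pair marginals
  of the new measure. All bounds hold for every n, so no lower bound n0 is needed.\<close>

lemma ex_nths_eq:
  fixes \<tau> :: "'a list"
  shows "J \<subseteq> {..<k} \<Longrightarrow> length \<tau> = card J \<Longrightarrow> \<exists>\<sigma>. length \<sigma> = k \<and> nths \<sigma> J = \<tau>"
proof (induction k arbitrary: J \<tau>)
  case 0
  then show ?case by auto
next
  case (Suc k)
  define J' where "J' = {j. Suc j \<in> J}"
  have J'_sub: "J' \<subseteq> {..<k}" using Suc.prems(1) by (auto simp: J'_def)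
  have J_eq: "J = (if 0 \<in> J then {0} else {}) \<union> Suc ` J'"
  proof (intro set_eqI iffI)
    fix x assume "x \<in> J" thus "x \<in> (if 0 \<in> J then {0} else {}) \<union> Suc ` J'"
      by (cases x) (auto simp: J'_def)
  qed (auto simp: J'_def split: if_splits)
  have card_Suc_J': "card (Suc ` J') = card J'" by (simp add: card_image)
  show ?case
  proof (cases "0 \<in> J")
    case True
    have "J = insert 0 (Suc ` J')" using J_eq True by simp
    moreover have "finite J'" using J'_sub finite_subset by blast
    ultimately have "card J = Suc (card J')" using card_Suc_J' by (simp add: card_insert_disjoint)
    then obtain t \<tau>' where \<tau>: "\<tau> = t # \<tau>'" "length \<tau>' = card J'"
      using Suc.prems(2) by (cases \<tau>) auto
    obtain \<sigma>' where "length \<sigma>' = k" "nths \<sigma>' J' = \<tau>'" using Suc.IH[OF J'_sub \<tau>(2)] by blast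
    then show ?thesis using True \<tau>
      by (intro exI[of _ "t # \<sigma>'"]) (simp add: nths_Cons J'_def)
  next
    case False
    have "card J = card J'" using J_eq False card_Suc_J' by simp
    then obtain \<sigma>' where "length \<sigma>' = k" "nths \<sigma>' J' = \<tau>"
      using Suc.IH[OF J'_sub] Suc.prems(2) by metis
    then show ?thesis using False
      by (intro exI[of _ "undefined # \<sigma>'"]) (simp add: nths_Cons J'_def)
  qed
qed

lemma psiJ_pos:
  fixes \<psi> :: "'o::finite list \<Rightarrow> real"
  assumes "\<forall>\<sigma>. length \<sigma> = k \<longrightarrow> \<psi> \<sigma> > 0" "J \<subseteq> {..<k}" "length \<tau> = card J"
  shows "psiJ k \<psi> J \<tau> > 0"
proof -
  let ?S = "{\<sigma>::'o list. length \<sigma> = k \<and> nths \<sigma> J = \<tau>}"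
  have "finite ?S"
    by (rule finite_subset[OF _ finite_lists_length_eq[of "UNIV::'o set" k]]) auto
  moreover have "?S \<noteq> {}" using ex_nths_eq[OF assms(2,3)] by blast
  ultimately have "(\<Sum>\<sigma>\<in>?S. \<psi> \<sigma>) > 0"
    using assms(1) by (intro sum_pos) auto
  then show ?thesis unfolding psiJ_def by (simp add: finite_UNIV_card_ge_0)
qed

lemma psi_star_bounds:
  fixes \<Psi> :: "('o::finite list \<Rightarrow> real) set"
  assumes "finite \<Psi>" "\<forall>\<psi>\<in>\<Psi>. \<forall>\<sigma>. length \<sigma> = k \<longrightarrow> \<psi> \<sigma> > 0"
  obtains m0 M0 where "0 < m0" "m0 \<le> M0"
    "\<And>f a \<tau>. (f, a) \<in> psi_star k \<Psi> \<Longrightarrow> length \<tau> = a \<Longrightarrow> m0 \<le> f \<tau> \<and> f \<tau> \<le> M0"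
proof -
  define V where "V = {f \<tau> | f a \<tau>. (f, a) \<in> psi_star k \<Psi> \<and> length (\<tau>::'o list) = a}"
  have "V \<subseteq> (\<Union>\<psi>\<in>\<Psi>. \<Union>J\<in>Pow {..<k}. psiJ k \<psi> J ` {\<tau>. length \<tau> = card J})"
    unfolding V_def psi_star_def by blast
  moreover have "finite {\<tau>::'o list. length \<tau> = a}" for a
    using finite_lists_length_eq[of "UNIV::'o set" a] by simp
  ultimately have fin: "finite V"
    by (elim finite_subset) (auto intro!: finite_UN_I assms(1) finite_imageI)
  have pos: "\<forall>v\<in>V. v > 0"
    unfolding V_def psi_star_def using psiJ_pos assms(2) by blast
  show ?thesis
  proof
    show "0 < Min (insert 1 V)" using fin pos by (subst Min_gr_iff) auto
    show "Min (insert 1 V) \<le> Max (insert 1 V)" using fin by (meson Max_ge Min_le finite_insert insertI1 order_trans)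
    fix f a and \<tau> :: "'o list" assume "(f, a) \<in> psi_star k \<Psi>" "length \<tau> = a"
    then have "f \<tau> \<in> V" unfolding V_def by blast
    then show "Min (insert 1 V) \<le> f \<tau> \<and> f \<tau> \<le> Max (insert 1 V)" using fin by simp
  qed
qed

lemma weight_bounds:
  assumes "valid_fg n W B" "0 < lo"
    and "\<And>f a \<tau>. (f, a) \<in> W \<Longrightarrow> length \<tau> = a \<Longrightarrow> lo \<le> f \<tau> \<and> f \<tau> \<le> hi"
  shows "lo ^ length B \<le> weight B \<sigma> \<and> weight B \<sigma> \<le> hi ^ length B"
  using assms(1)
proof (induction B)
  case Nil
  then show ?case by (simp add: weight_def)
next
  case (Cons b B)
  obtain d \<psi> where b: "b = (d, \<psi>)" by (cases b)
  have w: "weight (b # B) \<sigma> = \<psi> (map \<sigma> d) * weight B \<sigma>" by (simp add: weight_def b)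
  have "(\<psi>, length d) \<in> W" using Cons.prems b by (simp add: valid_fg_def)
  then have \<psi>: "lo \<le> \<psi> (map \<sigma> d)" "\<psi> (map \<sigma> d) \<le> hi" using assms(3) by auto
  have IH: "lo ^ length B \<le> weight B \<sigma>" "weight B \<sigma> \<le> hi ^ length B"
    using Cons by (auto simp: valid_fg_def)
  have "0 \<le> lo ^ length B" using assms(2) by simp
  then have "0 \<le> weight B \<sigma>" using IH(1) by linarith
  then show ?case
    using w \<psi> IH assms(2) by (auto intro!: mult_mono)
qed

definition expect :: "('a \<Rightarrow> real) \<Rightarrow> 'a set \<Rightarrow> ('a \<Rightarrow> real) \<Rightarrow> real" where
  "expect p C f = (\<Sum>\<sigma>\<in>C. p \<sigma> * f \<sigma>)"

definition cov :: "('a \<Rightarrow> real) \<Rightarrow> 'a set \<Rightarrow> ('a \<Rightarrow> real) \<Rightarrow> ('a \<Rightarrow> real) \<Rightarrow> real" where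
  "cov p C f g = expect p C (\<lambda>\<sigma>. (f \<sigma> - expect p C f) * (g \<sigma> - expect p C g))"

lemma expect_diff_scaled:
  "expect p C (\<lambda>\<sigma>. f \<sigma> - c * g \<sigma>) = expect p C f - c * expect p C g"
  unfolding expect_def by (simp add: sum_subtractf sum_distrib_left algebra_simps)

locale finite_distribution =
  fixes C :: "'a set" and p :: "'a \<Rightarrow> real"
  assumes finite_C: "finite C"
    and nonneg: "\<And>\<sigma>. \<sigma> \<in> C \<Longrightarrow> 0 \<le> p \<sigma>"
    and sum_one: "sum p C = 1"
begin

lemma C_nonempty: "C \<noteq> {}"
  using sum_one by auto

lemma expect_const [simp]: "expect p C (\<lambda>\<sigma>. c) = c"
  unfolding expect_def using sum_one by (simp add: sum_distrib_right[symmetric])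

lemma expect_mono: "(\<And>\<sigma>. \<sigma> \<in> C \<Longrightarrow> f \<sigma> \<le> g \<sigma>) \<Longrightarrow> expect p C f \<le> expect p C g"
  unfolding expect_def using nonneg by (intro sum_mono mult_left_mono) auto

lemma abs_expect_le: "\<bar>expect p C f\<bar> \<le> expect p C (\<lambda>\<sigma>. \<bar>f \<sigma>\<bar>)"
  unfolding expect_def
  by (rule order_trans[OF sum_abs], rule sum_mono) (use nonneg in \<open>simp add: abs_mult\<close>)

lemma cov_eq: "cov p C f g = expect p C (\<lambda>\<sigma>. f \<sigma> * g \<sigma>) - expect p C f * expect p C g"
proof -
  define a b where "a = expect p C f" and "b = expect p C g"
  have "cov p C f g = expect p C (\<lambda>\<sigma>. (f \<sigma> - a) * (g \<sigma> - b))"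
    by (simp add: cov_def a_def b_def)
  also have "\<dots>
      = (\<Sum>\<sigma>\<in>C. p \<sigma> * (f \<sigma> * g \<sigma>) - b * (p \<sigma> * f \<sigma>) - a * (p \<sigma> * g \<sigma>) + a * b * p \<sigma>)"
    unfolding expect_def by (intro sum.cong) (auto simp: algebra_simps)
  also have "\<dots> = expect p C (\<lambda>\<sigma>. f \<sigma> * g \<sigma>) - b * a - a * b + a * b"
    unfolding sum.distrib sum_subtractf sum_distrib_left[symmetric] sum_one
    by (simp add: expect_def a_def b_def)
  finally show ?thesis by (simp add: a_def b_def)
qed

lemma expect_abs_le_sqrt_second_moment:
  "expect p C (\<lambda>\<sigma>. \<bar>f \<sigma>\<bar>) \<le> sqrt (expect p C (\<lambda>\<sigma>. (f \<sigma>)^2))"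
proof -
  define c where "c = expect p C (\<lambda>\<sigma>. \<bar>f \<sigma>\<bar>)"
  have "c \<ge> 0" unfolding c_def expect_def using nonneg by (intro sum_nonneg) auto
  have "0 \<le> (\<Sum>\<sigma>\<in>C. p \<sigma> * (\<bar>f \<sigma>\<bar> - c)^2)" using nonneg by (intro sum_nonneg) auto
  also have "\<dots> = (\<Sum>\<sigma>\<in>C. p \<sigma> * (f \<sigma>)^2 - 2 * c * (p \<sigma> * \<bar>f \<sigma>\<bar>) + c^2 * p \<sigma>)"
    by (intro sum.cong) (auto simp: power2_eq_square algebra_simps)
  also have "\<dots> = expect p C (\<lambda>\<sigma>. (f \<sigma>)^2) - 2 * c * c + c^2"
    unfolding expect_def c_def sum.distrib sum_subtractf sum_distrib_left[symmetric] sum_one by simp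
  finally have "c^2 \<le> expect p C (\<lambda>\<sigma>. (f \<sigma>)^2)" by (simp add: power2_eq_square)
  then show ?thesis unfolding c_def[symmetric] using \<open>c \<ge> 0\<close> by (simp add: real_le_rsqrt)
qed

text \<open>With W = \<Sum>y. sgn(E[g h_y]) h_y the left-hand side is E[g W] \<le> K E|W|, and E[W^2] is
  bounded by the double sum.\<close>
lemma sum_abs_expect_mult_le:
  assumes "finite Y" "\<And>\<sigma>. \<sigma> \<in> C \<Longrightarrow> \<bar>g \<sigma>\<bar> \<le> K"
  shows "(\<Sum>y\<in>Y. \<bar>expect p C (\<lambda>\<sigma>. g \<sigma> * h y \<sigma>)\<bar>)
         \<le> K * sqrt (\<Sum>y\<in>Y. \<Sum>z\<in>Y. \<bar>expect p C (\<lambda>\<sigma>. h y \<sigma> * h z \<sigma>)\<bar>)"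
proof -
  have "K \<ge> 0" using C_nonempty assms(2) by force
  define s where "s y = sgn (expect p C (\<lambda>\<sigma>. g \<sigma> * h y \<sigma>))" for y
  define W where "W \<sigma> = (\<Sum>y\<in>Y. s y * h y \<sigma>)" for \<sigma>
  have s_le_1: "\<bar>s y * s z\<bar> \<le> 1" for y z unfolding s_def by (simp add: abs_mult abs_sgn_eq)
  have "(\<Sum>y\<in>Y. \<bar>expect p C (\<lambda>\<sigma>. g \<sigma> * h y \<sigma>)\<bar>) = (\<Sum>y\<in>Y. s y * expect p C (\<lambda>\<sigma>. g \<sigma> * h y \<sigma>))"
    unfolding s_def by (intro sum.cong) (auto simp: abs_sgn)
  also have "\<dots> = expect p C (\<lambda>\<sigma>. g \<sigma> * W \<sigma>)"
    unfolding expect_def W_def sum_distrib_left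
    by (subst sum.swap) (intro sum.cong, auto simp: algebra_simps)
  also have "\<dots> \<le> expect p C (\<lambda>\<sigma>. K * \<bar>W \<sigma>\<bar>)"
  proof (rule expect_mono)
    fix \<sigma> assume "\<sigma> \<in> C"
    have "g \<sigma> * W \<sigma> \<le> \<bar>g \<sigma>\<bar> * \<bar>W \<sigma>\<bar>" by (simp flip: abs_mult)
    also have "\<dots> \<le> K * \<bar>W \<sigma>\<bar>" using assms(2)[OF \<open>\<sigma> \<in> C\<close>] by (rule mult_right_mono) simp
    finally show "g \<sigma> * W \<sigma> \<le> K * \<bar>W \<sigma>\<bar>" .
  qed
  also have "\<dots> = K * expect p C (\<lambda>\<sigma>. \<bar>W \<sigma>\<bar>)"
    unfolding expect_def sum_distrib_left by (simp add: algebra_simps)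
  also have "\<dots> \<le> K * sqrt (expect p C (\<lambda>\<sigma>. (W \<sigma>)^2))"
    using expect_abs_le_sqrt_second_moment \<open>K \<ge> 0\<close> by (intro mult_left_mono) auto
  also have "expect p C (\<lambda>\<sigma>. (W \<sigma>)^2)
      = (\<Sum>y\<in>Y. \<Sum>z\<in>Y. s y * s z * expect p C (\<lambda>\<sigma>. h y \<sigma> * h z \<sigma>))"
  proof -
    have "expect p C (\<lambda>\<sigma>. (W \<sigma>)^2)
        = (\<Sum>\<sigma>\<in>C. \<Sum>y\<in>Y. \<Sum>z\<in>Y. s y * s z * (p \<sigma> * (h y \<sigma> * h z \<sigma>)))"
      unfolding expect_def W_def power2_eq_square
      by (simp add: sum_distrib_left sum_distrib_right mult_ac)
    also have "\<dots> = (\<Sum>y\<in>Y. \<Sum>z\<in>Y. \<Sum>\<sigma>\<in>C. s y * s z * (p \<sigma> * (h y \<sigma> * h z \<sigma>)))"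
      by (simp only: sum.swap[where A = C])
    finally show ?thesis unfolding expect_def sum_distrib_left .
  qed
  also have "\<dots> \<le> (\<Sum>y\<in>Y. \<Sum>z\<in>Y. \<bar>expect p C (\<lambda>\<sigma>. h y \<sigma> * h z \<sigma>)\<bar>)"
  proof (intro sum_mono)
    fix y z
    have "s y * s z * expect p C (\<lambda>\<sigma>. h y \<sigma> * h z \<sigma>)
        \<le> \<bar>s y * s z\<bar> * \<bar>expect p C (\<lambda>\<sigma>. h y \<sigma> * h z \<sigma>)\<bar>"
      by (metis abs_ge_self abs_mult)
    also have "\<dots> \<le> \<bar>expect p C (\<lambda>\<sigma>. h y \<sigma> * h z \<sigma>)\<bar>"
      using s_le_1 by (simp add: mult_left_le_one_le)
    finally show "s y * s z * expect p C (\<lambda>\<sigma>. h y \<sigma> * h z \<sigma>) \<le> \<bar>expect p C (\<lambda>\<sigma>. h y \<sigma> * h z \<sigma>)\<bar>" .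
  qed
  finally show ?thesis using \<open>K \<ge> 0\<close> by (simp add: mult_left_mono)
qed

end

definition spin_indicator :: "nat \<Rightarrow> 'o \<Rightarrow> (nat \<Rightarrow> 'o) \<Rightarrow> real" where
  "spin_indicator x \<omega> \<sigma> = (if \<sigma> x = \<omega> then 1 else 0)"

locale reweighting = finite_distribution C \<mu> for C :: "(nat \<Rightarrow> 'o::finite) set" and \<mu> +
  fixes F :: "(nat \<Rightarrow> 'o) \<Rightarrow> real" and m M \<delta> :: real and n :: nat
  assumes F_bounds: "\<And>\<sigma>. \<sigma> \<in> C \<Longrightarrow> m \<le> F \<sigma> \<and> F \<sigma> \<le> M"
    and m_pos: "0 < m" and \<delta>_nonneg: "0 \<le> \<delta>"
    and cov_small: "\<And>\<omega>. (\<Sum>y<n. \<Sum>z<n. \<bar>cov \<mu> C (spin_indicator y \<omega>) (spin_indicator z \<omega>)\<bar>) \<le> (\<delta> * n)^2"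
begin

definition D where "D = expect \<mu> C F"
definition \<nu> where "\<nu> \<sigma> = \<mu> \<sigma> * F \<sigma> / D"
definition mean where "mean x \<omega> = expect \<mu> C (spin_indicator x \<omega>)"
definition centred where "centred x \<omega> \<sigma> = spin_indicator x \<omega> \<sigma> - mean x \<omega>"

lemma F_nonneg: "\<sigma> \<in> C \<Longrightarrow> 0 \<le> F \<sigma>"
  using F_bounds m_pos by force

lemma D_ge_m: "m \<le> D"
  using expect_mono[of "\<lambda>_. m" F] F_bounds unfolding D_def by simp

lemma D_pos: "0 < D"
  using D_ge_m m_pos by simp

lemma M_nonneg: "0 \<le> M"
  using C_nonempty F_bounds m_pos by force

lemma abs_centred_le_1: "\<bar>centred x \<omega> \<sigma>\<bar> \<le> 1"
proof -
  have "expect \<mu> C (\<lambda>\<sigma>. 0) \<le> mean x \<omega>" "mean x \<omega> \<le> expect \<mu> C (\<lambda>\<sigma>. 1)"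
    unfolding mean_def by (intro expect_mono, simp add: spin_indicator_def)+
  then show ?thesis unfolding centred_def spin_indicator_def by auto
qed

lemma expect_\<nu>: "expect \<nu> C f = expect \<mu> C (\<lambda>\<sigma>. F \<sigma> * f \<sigma>) / D"
  unfolding expect_def \<nu>_def by (simp add: sum_divide_distrib algebra_simps)

lemma mean_shift_eq:
  "expect \<nu> C (spin_indicator x \<omega>) - mean x \<omega> = expect \<mu> C (\<lambda>\<sigma>. F \<sigma> * centred x \<omega> \<sigma>) / D"
proof -
  have "expect \<mu> C (\<lambda>\<sigma>. F \<sigma> * centred x \<omega> \<sigma>)
      = expect \<mu> C (\<lambda>\<sigma>. F \<sigma> * spin_indicator x \<omega> \<sigma> - mean x \<omega> * F \<sigma>)"
    unfolding centred_def by (simp add: algebra_simps)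
  also have "\<dots> = expect \<mu> C (\<lambda>\<sigma>. F \<sigma> * spin_indicator x \<omega> \<sigma>) - mean x \<omega> * D"
    unfolding D_def by (rule expect_diff_scaled)
  finally show ?thesis using D_pos by (simp add: expect_\<nu> field_simps)
qed

lemma abs_mean_shift_le_1: "\<bar>expect \<nu> C (spin_indicator x \<omega>) - mean x \<omega>\<bar> \<le> 1"
proof -
  have "\<bar>expect \<mu> C (\<lambda>\<sigma>. F \<sigma> * centred x \<omega> \<sigma>)\<bar> \<le> expect \<mu> C (\<lambda>\<sigma>. \<bar>F \<sigma> * centred x \<omega> \<sigma>\<bar>)"
    by (rule abs_expect_le)
  also have "\<dots> \<le> D"
    unfolding D_def using F_nonneg abs_centred_le_1
    by (intro expect_mono) (simp add: abs_mult mult_left_le)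
  finally show ?thesis unfolding mean_shift_eq using D_pos by (simp add: divide_le_eq_1)
qed

lemma sum_abs_expect_mult_centred_le:
  assumes "\<And>\<sigma>. \<sigma> \<in> C \<Longrightarrow> \<bar>g \<sigma>\<bar> \<le> M"
  shows "(\<Sum>y<n. \<bar>expect \<mu> C (\<lambda>\<sigma>. g \<sigma> * centred y \<omega> \<sigma>)\<bar>) / D \<le> M * \<delta> * n / m"
proof -
  have cov_centred: "expect \<mu> C (\<lambda>\<sigma>. centred y \<omega> \<sigma> * centred z \<omega> \<sigma>)
      = cov \<mu> C (spin_indicator y \<omega>) (spin_indicator z \<omega>)" for y z
    unfolding cov_def centred_def mean_def ..
  have "(\<Sum>y<n. \<bar>expect \<mu> C (\<lambda>\<sigma>. g \<sigma> * centred y \<omega> \<sigma>)\<bar>)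
      \<le> M * sqrt (\<Sum>y<n. \<Sum>z<n. \<bar>expect \<mu> C (\<lambda>\<sigma>. centred y \<omega> \<sigma> * centred z \<omega> \<sigma>)\<bar>)"
    using assms by (intro sum_abs_expect_mult_le) auto
  also have "\<dots> \<le> M * sqrt ((\<delta> * n)^2)"
    unfolding cov_centred using cov_small M_nonneg by (intro mult_left_mono real_sqrt_le_mono)
  also have "\<dots> = M * \<delta> * n" using \<delta>_nonneg by simp
  finally have "(\<Sum>y<n. \<bar>expect \<mu> C (\<lambda>\<sigma>. g \<sigma> * centred y \<omega> \<sigma>)\<bar>) / D \<le> M * \<delta> * n / D"
    using D_pos by (simp add: divide_right_mono)
  also have "\<dots> \<le> M * \<delta> * n / m"
    using D_ge_m m_pos M_nonneg \<delta>_nonneg by (intro divide_left_mono) auto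
  finally show ?thesis .
qed

lemma sum_abs_mean_shift_le:
  "(\<Sum>x<n. \<bar>expect \<nu> C (spin_indicator x \<omega>) - mean x \<omega>\<bar>) \<le> M * \<delta> * n / m"
proof -
  have "(\<Sum>x<n. \<bar>expect \<nu> C (spin_indicator x \<omega>) - mean x \<omega>\<bar>)
      = (\<Sum>x<n. \<bar>expect \<mu> C (\<lambda>\<sigma>. F \<sigma> * centred x \<omega> \<sigma>)\<bar>) / D"
    unfolding mean_shift_eq sum_divide_distrib by (simp add: abs_of_pos[OF D_pos])
  also have "\<dots> \<le> M * \<delta> * n / m"
    by (rule sum_abs_expect_mult_centred_le) (use F_bounds F_nonneg in \<open>simp add: abs_of_nonneg\<close>)
  finally show ?thesis .
qed

lemma sum_tv_marginals_le:
  "(\<Sum>x<n. tv (\<lambda>\<omega>. expect \<mu> C (spin_indicator x \<omega>)) (\<lambda>\<omega>. expect \<nu> C (spin_indicator x \<omega>)))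
    \<le> card (UNIV :: 'o set) * (M * \<delta> * n / m)"
proof -
  have "(\<Sum>x<n. tv (\<lambda>\<omega>. expect \<mu> C (spin_indicator x \<omega>)) (\<lambda>\<omega>. expect \<nu> C (spin_indicator x \<omega>)))
      = (1/2) * (\<Sum>\<omega>\<in>UNIV. \<Sum>x<n. \<bar>expect \<nu> C (spin_indicator x \<omega>) - mean x \<omega>\<bar>)"
    unfolding tv_def mean_def sum_distrib_left[symmetric]
    by (subst sum.swap) (simp add: abs_minus_commute)
  also have "\<dots> \<le> (1/2) * (card (UNIV :: 'o set) * (M * \<delta> * n / m))"
    using sum_bounded_above[of UNIV, OF sum_abs_mean_shift_le] by simp
  also have "\<dots> \<le> card (UNIV :: 'o set) * (M * \<delta> * n / m)"
    using M_nonneg \<delta>_nonneg m_pos by (simp add: frac_le)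
  finally show ?thesis .
qed

lemma reweighted_cov_eq:
  "expect \<nu> C (\<lambda>\<sigma>. spin_indicator x \<omega> \<sigma> * spin_indicator y \<omega>' \<sigma>)
     - expect \<nu> C (spin_indicator x \<omega>) * expect \<nu> C (spin_indicator y \<omega>')
   = expect \<mu> C (\<lambda>\<sigma>. F \<sigma> * centred x \<omega> \<sigma> * centred y \<omega>' \<sigma>) / D
     - (expect \<nu> C (spin_indicator x \<omega>) - mean x \<omega>) * (expect \<nu> C (spin_indicator y \<omega>') - mean y \<omega>')"
proof -
  have expand: "expect \<mu> C (\<lambda>\<sigma>. F \<sigma> * centred x \<omega> \<sigma> * centred y \<omega>' \<sigma>)
     = expect \<mu> C (\<lambda>\<sigma>. F \<sigma> * (spin_indicator x \<omega> \<sigma> * spin_indicator y \<omega>' \<sigma>))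
       - mean y \<omega>' * expect \<mu> C (\<lambda>\<sigma>. F \<sigma> * spin_indicator x \<omega> \<sigma>)
       - mean x \<omega> * expect \<mu> C (\<lambda>\<sigma>. F \<sigma> * spin_indicator y \<omega>' \<sigma>) + mean x \<omega> * mean y \<omega>' * D"
    unfolding expect_def D_def centred_def
    by (simp add: sum_subtractf sum.distrib sum_distrib_left algebra_simps)
  show ?thesis unfolding expect_\<nu> expand using D_pos by (simp add: field_simps)
qed

lemma sum_abs_reweighted_cov_le:
  "(\<Sum>x<n. \<Sum>y<n. \<bar>expect \<nu> C (\<lambda>\<sigma>. spin_indicator x \<omega> \<sigma> * spin_indicator y \<omega>' \<sigma>)
      - expect \<nu> C (spin_indicator x \<omega>) * expect \<nu> C (spin_indicator y \<omega>')\<bar>)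
   \<le> 2 * (n * (M * \<delta> * n / m))"
proof -
  let ?shift = "\<lambda>x \<omega>. \<bar>expect \<nu> C (spin_indicator x \<omega>) - mean x \<omega>\<bar>"
  have inner: "(\<Sum>y<n. \<bar>expect \<mu> C (\<lambda>\<sigma>. F \<sigma> * centred x \<omega> \<sigma> * centred y \<omega>' \<sigma>)\<bar>) / D
      \<le> M * \<delta> * n / m" for x
  proof -
    have "\<bar>F \<sigma> * centred x \<omega> \<sigma>\<bar> \<le> M" if "\<sigma> \<in> C" for \<sigma>
      using F_bounds[OF that] F_nonneg[OF that] abs_centred_le_1[of x \<omega> \<sigma>]
      by (simp add: abs_mult) (metis mult_left_le order_trans)
    then show ?thesis using sum_abs_expect_mult_centred_le[of "\<lambda>\<sigma>. F \<sigma> * centred x \<omega> \<sigma>" \<omega>']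
      by simp
  qed
  have "(\<Sum>x<n. \<Sum>y<n. \<bar>expect \<nu> C (\<lambda>\<sigma>. spin_indicator x \<omega> \<sigma> * spin_indicator y \<omega>' \<sigma>)
      - expect \<nu> C (spin_indicator x \<omega>) * expect \<nu> C (spin_indicator y \<omega>')\<bar>)
     \<le> (\<Sum>x<n. \<Sum>y<n. \<bar>expect \<mu> C (\<lambda>\<sigma>. F \<sigma> * centred x \<omega> \<sigma> * centred y \<omega>' \<sigma>)\<bar> / D + ?shift x \<omega>)"
  proof (intro sum_mono)
    fix x y
    let ?E = "expect \<mu> C (\<lambda>\<sigma>. F \<sigma> * centred x \<omega> \<sigma> * centred y \<omega>' \<sigma>)"
    have "\<bar>?E / D\<bar> = \<bar>?E\<bar> / D" using D_pos by simp
    moreover have "\<bar>(expect \<nu> C (spin_indicator x \<omega>) - mean x \<omega>) * (expect \<nu> C (spin_indicator y \<omega>') - mean y \<omega>')\<bar>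
        \<le> ?shift x \<omega>"
      using abs_mean_shift_le_1[of y \<omega>'] by (simp add: abs_mult mult_left_le)
    ultimately show "\<bar>expect \<nu> C (\<lambda>\<sigma>. spin_indicator x \<omega> \<sigma> * spin_indicator y \<omega>' \<sigma>)
        - expect \<nu> C (spin_indicator x \<omega>) * expect \<nu> C (spin_indicator y \<omega>')\<bar>
        \<le> \<bar>expect \<mu> C (\<lambda>\<sigma>. F \<sigma> * centred x \<omega> \<sigma> * centred y \<omega>' \<sigma>)\<bar> / D + ?shift x \<omega>"
      unfolding reweighted_cov_eq by linarith
  qed
  also have "\<dots> = (\<Sum>x<n. (\<Sum>y<n. \<bar>expect \<mu> C (\<lambda>\<sigma>. F \<sigma> * centred x \<omega> \<sigma> * centred y \<omega>' \<sigma>)\<bar>) / D)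
      + n * (\<Sum>x<n. ?shift x \<omega>)"
    by (simp add: sum.distrib sum_distrib_left sum_divide_distrib)
  also have "\<dots> \<le> n * (M * \<delta> * n / m) + n * (M * \<delta> * n / m)"
    using sum_bounded_above[of "{..<n}", OF inner] sum_abs_mean_shift_le[of \<omega>]
    by (intro add_mono mult_left_mono) auto
  finally show ?thesis by (simp add: algebra_simps)
qed

lemma sum_tv_pair_marginals_le:
  "(\<Sum>x<n. \<Sum>y<n. tv (\<lambda>pr. expect \<nu> C (\<lambda>\<sigma>. spin_indicator x (fst pr) \<sigma> * spin_indicator y (snd pr) \<sigma>))
       (\<lambda>pr. expect \<nu> C (spin_indicator x (fst pr)) * expect \<nu> C (spin_indicator y (snd pr))))
    \<le> real (card (UNIV :: 'o set))^2 * (n * (M * \<delta> * n / m))"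
proof -
  let ?f = "\<lambda>x y pr. \<bar>expect \<nu> C (\<lambda>\<sigma>. spin_indicator x (fst pr) \<sigma> * spin_indicator y (snd pr) \<sigma>)
      - expect \<nu> C (spin_indicator x (fst pr)) * expect \<nu> C (spin_indicator y (snd pr))\<bar>"
  have "(\<Sum>x<n. \<Sum>y<n. tv (\<lambda>pr. expect \<nu> C (\<lambda>\<sigma>. spin_indicator x (fst pr) \<sigma> * spin_indicator y (snd pr) \<sigma>))
       (\<lambda>pr. expect \<nu> C (spin_indicator x (fst pr)) * expect \<nu> C (spin_indicator y (snd pr))))
      = (1/2) * (\<Sum>x<n. \<Sum>y<n. \<Sum>pr\<in>UNIV. ?f x y pr)"
    unfolding tv_def by (simp add: abs_minus_commute sum_distrib_left)
  also have "(\<Sum>x<n. \<Sum>y<n. \<Sum>pr\<in>UNIV. ?f x y pr) = (\<Sum>x<n. \<Sum>pr\<in>UNIV. \<Sum>y<n. ?f x y pr)"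
    by (intro sum.cong refl) (rule sum.swap)
  also have "\<dots> = (\<Sum>pr\<in>UNIV. \<Sum>x<n. \<Sum>y<n. ?f x y pr)"
    by (rule sum.swap)
  also have "\<dots> \<le> card (UNIV :: ('o \<times> 'o) set) * (2 * (n * (M * \<delta> * n / m)))"
    using sum_bounded_above[of UNIV, OF sum_abs_reweighted_cov_le] by auto
  also have "real (card (UNIV :: ('o \<times> 'o) set)) = real (card (UNIV :: 'o set))^2"
    by (simp add: UNIV_Times_UNIV[symmetric] card_cartesian_product power2_eq_square del: UNIV_Times_UNIV)
  finally show ?thesis by simp
qed

end

lemma finite_configs: "finite (configs n :: (nat \<Rightarrow> 'o::finite) set)"
  unfolding configs_def by (intro finite_PiE) auto

lemma partition_fn_pos:
  fixes G :: "'o::finite constraints"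
  assumes "\<And>\<sigma>. 0 < weight G \<sigma>"
  shows "0 < partition_fn n G"
proof -
  have "configs n \<noteq> {}" unfolding configs_def by (simp add: PiE_eq_empty_iff)
  then show ?thesis
    unfolding partition_fn_def using finite_configs assms by (intro sum_pos) auto
qed

lemma gibbs_finite_distribution:
  fixes G :: "'o::finite constraints"
  assumes "\<And>\<sigma>. 0 < weight G \<sigma>"
  shows "finite_distribution (configs n) (gibbs n G)"
proof
  show "\<And>\<sigma>. 0 \<le> gibbs n G \<sigma>"
    unfolding gibbs_def using assms partition_fn_pos[OF assms, of n] by (simp add: less_imp_le)
  show "sum (gibbs n G) (configs n) = 1"
    using partition_fn_pos[OF assms, of n]
    unfolding gibbs_def by (simp add: sum_divide_distrib[symmetric] partition_fn_def)
qed (rule finite_configs)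

lemma marg1_eq_expect:
  fixes G :: "'o::finite constraints"
  shows "marg1 n G x \<omega> = expect (gibbs n G) (configs n) (spin_indicator x \<omega>)"
  unfolding marg1_def expect_def sum.inter_filter[OF finite_configs]
  by (intro sum.cong) (auto simp: spin_indicator_def)

lemma marg2_eq_expect:
  fixes G :: "'o::finite constraints"
  shows "marg2 n G x y pr
     = expect (gibbs n G) (configs n) (\<lambda>\<sigma>. spin_indicator x (fst pr) \<sigma> * spin_indicator y (snd pr) \<sigma>)"
  unfolding marg2_def expect_def sum.inter_filter[OF finite_configs]
  by (intro sum.cong) (auto simp: spin_indicator_def)

lemma weight_append: "weight (G @ B) \<sigma> = weight G \<sigma> * weight B \<sigma>"
  by (simp add: weight_def)

lemma gibbs_append:
  fixes G :: "'o::finite constraints"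
  assumes "\<And>\<sigma>. 0 < weight G \<sigma>"
  shows "gibbs n (G @ B) \<sigma>
    = gibbs n G \<sigma> * weight B \<sigma> / expect (gibbs n G) (configs n) (weight B)"
proof -
  have "expect (gibbs n G) (configs n) (weight B) = partition_fn n (G @ B) / partition_fn n G"
    by (simp add: expect_def gibbs_def partition_fn_def weight_append sum_divide_distrib)
  then show ?thesis
    using partition_fn_pos[OF assms, of n] unfolding gibbs_def weight_append by simp
qed

lemma abs_cov_spin_indicators_le_tv:
  fixes G :: "'o::finite constraints"
  assumes "\<And>\<sigma>. 0 < weight G \<sigma>"
  shows "\<bar>cov (gibbs n G) (configs n) (spin_indicator y \<omega>) (spin_indicator z \<omega>)\<bar>
    \<le> 2 * tv (marg2 n G y z) (\<lambda>p. marg1 n G y (fst p) * marg1 n G z (snd p))"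
proof -
  interpret finite_distribution "configs n" "gibbs n G"
    by (rule gibbs_finite_distribution[OF assms])
  have "\<bar>marg2 n G y z (\<omega>, \<omega>) - marg1 n G y (fst (\<omega>, \<omega>)) * marg1 n G z (snd (\<omega>, \<omega>))\<bar>
      \<le> (\<Sum>p\<in>UNIV. \<bar>marg2 n G y z p - marg1 n G y (fst p) * marg1 n G z (snd p)\<bar>)"
    by (rule member_le_sum) auto
  then show ?thesis unfolding cov_eq tv_def marg1_eq_expect marg2_eq_expect by simp
qed

lemma symmetric2_imp_sum_abs_cov_le:
  fixes G :: "'o::finite constraints"
  assumes "\<And>\<sigma>. 0 < weight G \<sigma>" "symmetric2 (\<delta>^2 / 2) n G"
  shows "(\<Sum>y<n. \<Sum>z<n. \<bar>cov (gibbs n G) (configs n) (spin_indicator y \<omega>) (spin_indicator z \<omega>)\<bar>)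
    \<le> (\<delta> * n)^2"
proof -
  have "(\<Sum>y<n. \<Sum>z<n. \<bar>cov (gibbs n G) (configs n) (spin_indicator y \<omega>) (spin_indicator z \<omega>)\<bar>)
      \<le> 2 * (\<Sum>y<n. \<Sum>z<n. tv (marg2 n G y z) (\<lambda>p. marg1 n G y (fst p) * marg1 n G z (snd p)))"
    unfolding sum_distrib_left
    by (intro sum_mono abs_cov_spin_indicators_le_tv[OF assms(1)])
  also have "\<dots> \<le> (\<delta> * n)^2"
    using assms(2) unfolding symmetric2_def by (simp add: power_mult_distrib)
  finally show ?thesis .
qed

lemma append_constraints_marginal_bounds:
  fixes G B :: "'o::finite constraints"
  assumes "\<And>\<sigma>. 0 < weight G \<sigma>" "\<And>\<sigma>. m \<le> weight B \<sigma> \<and> weight B \<sigma> \<le> M" "0 < m" "0 \<le> \<delta>"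
    and "symmetric2 (\<delta>^2 / 2) n G"
  shows "(\<Sum>x<n. tv (marg1 n G x) (marg1 n (G @ B) x)) \<le> card (UNIV :: 'o set) * (M * \<delta> * n / m)"
    and "(\<Sum>x<n. \<Sum>y<n. tv (marg2 n (G @ B) x y) (\<lambda>p. marg1 n (G @ B) x (fst p) * marg1 n (G @ B) y (snd p)))
      \<le> real (card (UNIV :: 'o set))^2 * (n * (M * \<delta> * n / m))"
proof -
  interpret finite_distribution "configs n" "gibbs n G"
    by (rule gibbs_finite_distribution[OF assms(1)])
  interpret reweighting "configs n" "gibbs n G" "weight B" m M \<delta> n
    by unfold_locales (use assms symmetric2_imp_sum_abs_cov_le[OF assms(1,5)] in auto)
  have "gibbs n (G @ B) = \<nu>"
    using gibbs_append[OF assms(1)] by (auto simp: \<nu>_def D_def)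
  then have marg: "marg1 n (G @ B) x \<omega> = expect \<nu> (configs n) (spin_indicator x \<omega>)"
    "marg2 n (G @ B) x y pr
       = expect \<nu> (configs n) (\<lambda>\<sigma>. spin_indicator x (fst pr) \<sigma> * spin_indicator y (snd pr) \<sigma>)"
    for x y \<omega> pr
    by (simp_all only: marg1_eq_expect marg2_eq_expect)
  show "(\<Sum>x<n. tv (marg1 n G x) (marg1 n (G @ B) x)) \<le> card (UNIV :: 'o set) * (M * \<delta> * n / m)"
    using sum_tv_marginals_le unfolding marg(1) unfolding marg1_eq_expect .
  show "(\<Sum>x<n. \<Sum>y<n. tv (marg2 n (G @ B) x y) (\<lambda>p. marg1 n (G @ B) x (fst p) * marg1 n (G @ B) y (snd p)))
      \<le> real (card (UNIV :: 'o set))^2 * (n * (M * \<delta> * n / m))"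
    using sum_tv_pair_marginals_le unfolding marg .
qed

lemma psi_star_append_marginal_bounds:
  fixes \<Psi> :: "('o::finite list \<Rightarrow> real) set"
  assumes "finite \<Psi>" "\<forall>\<psi>\<in>\<Psi>. \<forall>\<sigma>. length \<sigma> = k \<longrightarrow> \<psi> \<sigma> > 0"
  obtains c :: "nat \<Rightarrow> real" where "\<And>L. 0 < c L"
    and "\<And>n G B \<delta>. valid_fg n (psi_star k \<Psi>) G \<Longrightarrow> valid_fg n (psi_star k \<Psi>) B \<Longrightarrow> 0 \<le> \<delta>
      \<Longrightarrow> symmetric2 (\<delta>^2 / 2) n G
      \<Longrightarrow> (\<Sum>x<n. tv (marg1 n G x) (marg1 n (G @ B) x)) \<le> c (length B) * \<delta> * n
        \<and> (\<Sum>x<n. \<Sum>y<n. tv (marg2 n (G @ B) x y)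
              (\<lambda>p. marg1 n (G @ B) x (fst p) * marg1 n (G @ B) y (snd p)))
          \<le> c (length B) * \<delta> * real n ^ 2"
proof -
  obtain m0 M0 where m0: "0 < m0" "m0 \<le> M0" and bounds:
    "\<And>f a \<tau>. (f, a) \<in> psi_star k \<Psi> \<Longrightarrow> length \<tau> = a \<Longrightarrow> m0 \<le> f \<tau> \<and> f \<tau> \<le> M0"
    using psi_star_bounds[OF assms] by blast
  define q where "q = real (card (UNIV :: 'o set))"
  have "1 \<le> q" unfolding q_def using finite_UNIV_card_ge_0[where 'a='o] by simp
  show ?thesis
  proof
    show "0 < q^2 * (M0 ^ L / m0 ^ L)" for L using m0 \<open>1 \<le> q\<close> by simp
    fix n G B and \<delta> :: real
    assume G: "valid_fg n (psi_star k \<Psi>) G" and B: "valid_fg n (psi_star k \<Psi>) B"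
      and "0 \<le> \<delta>" and sym: "symmetric2 (\<delta>^2 / 2) n G"
    define m M where "m = m0 ^ length B" and "M = M0 ^ length B"
    have "0 < m" "m \<le> M" unfolding m_def M_def using m0 by (auto intro: power_mono)
    have "m0 ^ length G \<le> weight G \<sigma>" for \<sigma>
      using weight_bounds[OF G m0(1)] bounds by blast
    then have weight_G_pos: "0 < weight G \<sigma>" for \<sigma>
      using m0(1) by (meson less_le_trans zero_less_power)
    have weight_B: "m \<le> weight B \<sigma> \<and> weight B \<sigma> \<le> M" for \<sigma>
      using weight_bounds[OF B m0(1)] bounds unfolding m_def M_def by blast
    note marginals = append_constraints_marginal_bounds[OF weight_G_pos weight_B \<open>0 < m\<close> \<open>0 \<le> \<delta>\<close> sym]
    have "q * (M * \<delta> * n / m) \<le> q^2 * (M * \<delta> * n / m)"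
    proof (rule mult_right_mono)
      show "q \<le> q^2" using mult_left_mono[of 1 q q] \<open>1 \<le> q\<close> by (simp add: power2_eq_square)
      show "0 \<le> M * \<delta> * n / m" using \<open>0 \<le> \<delta>\<close> \<open>0 < m\<close> \<open>m \<le> M\<close> by simp
    qed
    then show "(\<Sum>x<n. tv (marg1 n G x) (marg1 n (G @ B) x)) \<le> q^2 * (M0 ^ length B / m0 ^ length B) * \<delta> * n
      \<and> (\<Sum>x<n. \<Sum>y<n. tv (marg2 n (G @ B) x y)
              (\<lambda>p. marg1 n (G @ B) x (fst p) * marg1 n (G @ B) y (snd p)))
          \<le> q^2 * (M0 ^ length B / m0 ^ length B) * \<delta> * real n ^ 2"
      using marginals unfolding q_def m_def M_def by (simp add: power2_eq_square mult_ac)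
  qed
qed

theorem lemma7:
  fixes k :: nat and \<Psi> :: "('o::finite list \<Rightarrow> real) set"
  assumes "k \<ge> 3" and "finite \<Psi>" and "\<Psi> \<noteq> {}"
    and "\<forall>\<psi>\<in>\<Psi>. \<forall>\<sigma>. length \<sigma> = k \<longrightarrow> \<psi> \<sigma> > 0"
  shows "\<exists>N :: real \<Rightarrow> nat \<Rightarrow> nat. \<forall>(L::nat) (\<alpha>::real). L > 0 \<and> \<alpha> > 0 \<longrightarrow>
           (\<exists>\<epsilon>>0. \<forall>(n::nat) (G :: 'o constraints) (B :: 'o constraints).
              n > N \<epsilon> L \<and> valid_fg n (psi_star k \<Psi>) G \<and> symmetric2 \<epsilon> n G
              \<and> length B = L \<and> valid_fg n (psi_star k \<Psi>) B \<longrightarrow>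
                symmetric2 \<alpha> n (G @ B) \<and>
                (\<Sum>x<n. tv (marg1 n G x) (marg1 n (G @ B) x)) < \<alpha> * real n)"
proof -
  obtain c where c_pos: "\<And>L. 0 < c L" and bounds: "\<And>n G B \<delta>. valid_fg n (psi_star k \<Psi>) G
      \<Longrightarrow> valid_fg n (psi_star k \<Psi>) B \<Longrightarrow> 0 \<le> \<delta> \<Longrightarrow> symmetric2 (\<delta>^2 / 2) n G
      \<Longrightarrow> (\<Sum>x<n. tv (marg1 n G x) (marg1 n (G @ B) x)) \<le> c (length B) * \<delta> * n
        \<and> (\<Sum>x<n. \<Sum>y<n. tv (marg2 n (G @ B) x y)
              (\<lambda>p. marg1 n (G @ B) x (fst p) * marg1 n (G @ B) y (snd p)))
          \<le> c (length B) * \<delta> * real n ^ 2"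
    using psi_star_append_marginal_bounds[OF assms(2,4)] by blast
  show ?thesis
  proof (intro exI[of _ "\<lambda>_ _. 0"] allI impI)
    fix L :: nat and \<alpha> :: real assume "0 < L \<and> 0 < \<alpha>"
    define \<delta> where "\<delta> = \<alpha> / (2 * c L)"
    have "0 < \<delta>" "c L * \<delta> < \<alpha>"
      unfolding \<delta>_def using \<open>0 < L \<and> 0 < \<alpha>\<close> c_pos[of L] by simp_all
    show "\<exists>\<epsilon>>0. \<forall>n G B. n > 0 \<and> valid_fg n (psi_star k \<Psi>) G \<and> symmetric2 \<epsilon> n G
              \<and> length B = L \<and> valid_fg n (psi_star k \<Psi>) B \<longrightarrow>
                symmetric2 \<alpha> n (G @ B) \<and> (\<Sum>x<n. tv (marg1 n G x) (marg1 n (G @ B) x)) < \<alpha> * n"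
    proof (intro exI[of _ "\<delta>^2 / 2"] conjI allI impI)
      fix n and G B :: "'o constraints"
      assume H: "0 < n \<and> valid_fg n (psi_star k \<Psi>) G \<and> symmetric2 (\<delta>^2 / 2) n G
        \<and> length B = L \<and> valid_fg n (psi_star k \<Psi>) B"
      then have marginals: "(\<Sum>x<n. tv (marg1 n G x) (marg1 n (G @ B) x)) \<le> c L * \<delta> * n"
        "(\<Sum>x<n. \<Sum>y<n. tv (marg2 n (G @ B) x y)
              (\<lambda>p. marg1 n (G @ B) x (fst p) * marg1 n (G @ B) y (snd p))) \<le> c L * \<delta> * real n ^ 2"
        using bounds[of n G B \<delta>] \<open>0 < \<delta>\<close> by auto
      have "0 < real n" using H by simp
      show "(\<Sum>x<n. tv (marg1 n G x) (marg1 n (G @ B) x)) < \<alpha> * n"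
        using marginals(1) mult_strict_right_mono[OF \<open>c L * \<delta> < \<alpha>\<close> \<open>0 < real n\<close>] by linarith
      show "symmetric2 \<alpha> n (G @ B)"
        using marginals(2) mult_strict_right_mono[OF \<open>c L * \<delta> < \<alpha>\<close> zero_less_power[OF \<open>0 < real n\<close>, of 2]]
        unfolding symmetric2_def by linarith
    qed (use \<open>0 < \<delta>\<close> in simp)
  qed
qed

end
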